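(* Let $K\ge 2$, let $(\mathbf{x},\mathbf{y})$ be a training sample with one-hot label $\mathbf{y}$ whose ground-truth index is $g$ ($y_g=1$, $y_k=0$ for $k\neq g$), and let $\mathbf{o}=\mathcal{F}_\Theta(\mathbf{x})\in\mathbb{R}^K$ be the network's logits. Let $\mathcal{L}$ be any one of the three evidential losses $\mathcal{L}^{\mathrm{MSE}},\mathcal{L}^{\mathrm{CE}},\mathcal{L}^{\mathrm{Log}}$ defined in the context. (i) If $\mathcal{A}=\mathrm{ReLU}$ and $o_k\le 0$ for all $k$ (so that $\mathbf{e}=\mathbf{0}$, a zero-evidence sample), then $\partial\mathcal{L}/\partial o_k=0$ for every $k\in\{1,\dots,K\}$; consequently the gradient of $\mathcal{L}(\mathbf{x},\mathbf{y})$ with respect to the network parameters, $\partial\mathcal{L}/\partial\Theta=\sum_k(\partial\mathcal{L}/\partial o_k)(\partial o_k/\partial\Theta)$, is zero. (ii) If $\mathcal{A}=\mathrm{SoftPlus}$ or $\mathcal{A}=\exp$, then as the evidence tends to zero, i.e. as $o_k\to-\infty$ for all $k$, one has $\partial\mathcal{L}/\partial o_k\to 0$ for every $k$; consequently, whenever $\partial o_k/\partial\Theta$ remains bounded, the gradient of $\mathcal{L}(\mathbf{x},\mathbf{y})$ with respect to $\Theta$ tends to zero.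
   Context: Evidential classification model for $K$ classes: a neural network $\mathcal{F}_\Theta$ outputs logits $\mathbf{o}=\mathcal{F}_\Theta(\mathbf{x})\in\mathbb{R}^K$; a non-negative activation $\mathcal{A}$ applied componentwise gives the evidence $\mathbf{e}=\mathcal{A}(\mathbf{o})$, with $\mathcal{A}\in\{\mathrm{ReLU},\mathrm{SoftPlus},\exp\}$, where $\mathrm{ReLU}(t)=\max(0,t)$ (with derivative taken to be $1$ if $t>0$ and $0$ if $t\le 0$), $\mathrm{SoftPlus}(t)=\log(1+e^t)$. Dirichlet parameters $\boldsymbol\alpha=\mathbf{e}+\mathbf{1}$, Dirichlet strength $S=\sum_{k=1}^K\alpha_k=K+\sum_k e_k$. The evidential losses are $\mathcal{L}^{\mathrm{MSE}}(\mathbf{x},\mathbf{y})=\sum_{j=1}^K\big(y_j-\alpha_j/S\big)^2+\frac{\alpha_j(S-\alpha_j)}{S^2(S+1)}$, $\mathcal{L}^{\mathrm{CE}}(\mathbf{x},\mathbf{y})=\sum_{k=1}^K y_k\big(\Psi(S)-\Psi(\alpha_k)\big)$ with $\Psi$ the digamma function, $\mathcal{L}^{\mathrm{Log}}(\mathbf{x},\mathbf{y})=\sum_{k=1}^K y_k\big(\log S-\log\alpha_k\big)$. A zero-evidence sample is one for which the model outputs $e_k=0$ for all classes $k$. *)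

theory Defs
  imports "HOL-Analysis.Analysis"
begin

text \<open>Classes are indexed by a finite type 'n (K = CARD('n)); vectors in R^K are real^'n.\<close>

datatype activation = ReLU | SoftPlus | ExpAct
datatype evid_loss = MSE_loss | CE_loss | Log_loss

definition relu :: "real \<Rightarrow> real" where "relu t = max 0 t"
definition softplus :: "real \<Rightarrow> real" where "softplus t = ln (1 + exp t)"

definition relu_deriv :: "real \<Rightarrow> real" where "relu_deriv t = (if t > 0 then 1 else 0)"

fun act :: "activation \<Rightarrow> real \<Rightarrow> real" where
  "act ReLU t = relu t"
| "act SoftPlus t = softplus t"
| "act ExpAct t = exp t"

definition evidence :: "activation \<Rightarrow> real^'n \<Rightarrow> real^'n" where
  "evidence A z = (\<chi> k. act A (z $ k))"

definition dir_alpha :: "real^'n \<Rightarrow> real^'n" where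
  "dir_alpha e = (\<chi> k. e $ k + 1)"

definition dir_strength :: "real^'n \<Rightarrow> real" where
  "dir_strength e = (\<Sum>k\<in>UNIV. dir_alpha e $ k)"

fun loss_ev :: "evid_loss \<Rightarrow> real^'n \<Rightarrow> real^'n \<Rightarrow> real" where
  "loss_ev MSE_loss y e =
     (let \<alpha> = dir_alpha e; S = dir_strength e in
      \<Sum>j\<in>UNIV. (y $ j - \<alpha> $ j / S)^2 + \<alpha> $ j * (S - \<alpha> $ j) / (S^2 * (S + 1)))"
| "loss_ev CE_loss y e =
     (let \<alpha> = dir_alpha e; S = dir_strength e in
      \<Sum>k\<in>UNIV. y $ k * (Digamma S - Digamma (\<alpha> $ k)))"
| "loss_ev Log_loss y e =
     (let \<alpha> = dir_alpha e; S = dir_strength e in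
      \<Sum>k\<in>UNIV. y $ k * (ln S - ln (\<alpha> $ k)))"

definition loss_logits :: "evid_loss \<Rightarrow> activation \<Rightarrow> real^'n \<Rightarrow> real^'n \<Rightarrow> real" where
  "loss_logits L A y z = loss_ev L y (evidence A z)"

definition one_hot :: "'n \<Rightarrow> real^'n" where
  "one_hot g = (\<chi> k. if k = g then 1 else 0)"

definition partial_at :: "(real^'n \<Rightarrow> real) \<Rightarrow> 'n \<Rightarrow> real^'n \<Rightarrow> real" where
  "partial_at f k v = deriv (\<lambda>t. f (v + (t - v $ k) *\<^sub>R axis k 1)) (v $ k)"

definition partial_differentiable :: "(real^'n \<Rightarrow> real) \<Rightarrow> 'n \<Rightarrow> real^'n \<Rightarrow> bool" where
  "partial_differentiable f k v \<longleftrightarrow> (\<lambda>t. f (v + (t - v $ k) *\<^sub>R axis k 1)) differentiable (at (v $ k))"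

text \<open>Chain-rule gradient dL/do_k for the ReLU activation, with the paper's ReLU-derivative
  convention: (dL/de_k)(e) * ReLU'(o_k).\<close>
definition relu_grad_logit :: "evid_loss \<Rightarrow> real^'n \<Rightarrow> real^'n \<Rightarrow> 'n \<Rightarrow> real" where
  "relu_grad_logit L y z k =
     partial_at (loss_ev L y) k (evidence ReLU z) * relu_deriv (z $ k)"

definition all_to_bot :: "(real^'n) filter" where
  "all_to_bot = (INF b. principal {z. \<forall>k. z $ k \<le> b})"

end

theory Submission
  imports Defs
begin

text \<open>Each loss is a sum \<open>\<Sum>\<^sub>j l(y\<^sub>j, \<alpha>\<^sub>j, S)\<close> of functions that are smooth for \<open>\<alpha>, S > 0\<close>,
  so \<open>\<partial>L/\<partial>e\<^sub>k = \<partial>\<^sub>\<alpha>l\<^sub>k + \<Sum>\<^sub>j \<partial>\<^sub>Sl\<^sub>j\<close> is continuous on \<open>e > -1\<close>, and the chain rule gives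
  \<open>\<partial>L/\<partial>o\<^sub>k = \<A>'(o\<^sub>k) \<partial>L/\<partial>e\<^sub>k\<close>. For ReLU the factor \<open>\<A>'(o\<^sub>k)\<close> vanishes when \<open>o\<^sub>k \<le> 0\<close>.
  For SoftPlus and exp, as \<open>o \<rightarrow> -\<infinity>\<close> both \<open>\<A>'(o\<^sub>k) \<rightarrow> 0\<close> and \<open>e \<rightarrow> 0\<close>, so \<open>\<partial>L/\<partial>e\<^sub>k\<close> tends to
  its finite value at \<open>e = 0\<close> and the product tends to 0; a bounded Jacobian \<open>\<partial>o/\<partial>\<Theta>\<close>
  passes this on to the parameter gradient.\<close>

fun loss_term :: "evid_loss \<Rightarrow> real \<Rightarrow> real \<Rightarrow> real \<Rightarrow> real" where
  "loss_term MSE_loss y a s = (y - a / s)^2 + a * (s - a) / (s^2 * (s + 1))"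
| "loss_term CE_loss y a s = y * (Digamma s - Digamma a)"
| "loss_term Log_loss y a s = y * (ln s - ln a)"

fun loss_term_da :: "evid_loss \<Rightarrow> real \<Rightarrow> real \<Rightarrow> real \<Rightarrow> real" where
  "loss_term_da MSE_loss y a s = - 2 * (y - a / s) / s + (s - 2 * a) / (s^2 * (s + 1))"
| "loss_term_da CE_loss y a s = - y * Polygamma 1 a"
| "loss_term_da Log_loss y a s = - y / a"

fun loss_term_ds :: "evid_loss \<Rightarrow> real \<Rightarrow> real \<Rightarrow> real \<Rightarrow> real" where
  "loss_term_ds MSE_loss y a s =
     2 * (y - a / s) * a / s^2 + a * (a * (3 * s + 2) - s * (2 * s + 1)) / (s^3 * (s + 1)^2)"
| "loss_term_ds CE_loss y a s = y * Polygamma 1 s"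
| "loss_term_ds Log_loss y a s = y / s"

lemma has_real_derivative_loss_term:
  assumes a: "(a has_real_derivative a') (at t)" and s: "(s has_real_derivative s') (at t)"
    and pos: "a t > 0" "s t > 0"
  shows "((\<lambda>x. loss_term L y (a x) (s x)) has_real_derivative
           loss_term_da L y (a t) (s t) * a' + loss_term_ds L y (a t) (s t) * s') (at t)"
proof (cases L)
  case MSE_loss
  from pos have "s t \<noteq> 0" "s t + 1 \<noteq> 0" by auto
  then show ?thesis unfolding MSE_loss loss_term.simps loss_term_da.simps loss_term_ds.simps
    by (auto intro!: derivative_eq_intros a s) (simp add: divide_simps, algebra)
next
  case CE_loss
  with pos show ?thesis
    by (auto intro!: derivative_eq_intros a s simp: algebra_simps)
next
  case Log_loss
  with pos show ?thesis
    by (auto intro!: derivative_eq_intros a s simp: field_simps)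
qed

lemma tendsto_loss_term_da:
  assumes "(a \<longlongrightarrow> a0) F" "(s \<longlongrightarrow> s0) F" "a0 > 0" "s0 > 0"
  shows "((\<lambda>x. loss_term_da L y (a x) (s x)) \<longlongrightarrow> loss_term_da L y a0 s0) F"
  using assms by (cases L) (auto intro!: tendsto_intros isCont_tendsto_compose[OF isCont_Polygamma])

lemma tendsto_loss_term_ds:
  assumes "(a \<longlongrightarrow> a0) F" "(s \<longlongrightarrow> s0) F" "a0 > 0" "s0 > 0"
  shows "((\<lambda>x. loss_term_ds L y (a x) (s x)) \<longlongrightarrow> loss_term_ds L y a0 s0) F"
  using assms by (cases L) (auto intro!: tendsto_intros isCont_tendsto_compose[OF isCont_Polygamma])

lemma loss_ev_eq_sum_loss_term:
  "loss_ev L y e = (\<Sum>j\<in>UNIV. loss_term L (y $ j) (dir_alpha e $ j) (dir_strength e))"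
  by (cases L) (simp_all add: Let_def)

lemma dir_alpha_pos:
  assumes "\<forall>j. e $ j > -1" shows "dir_alpha e $ k > 0"
  using assms[rule_format, of k] by (simp add: dir_alpha_def)

lemma dir_strength_pos: "\<forall>j. e $ j > -1 \<Longrightarrow> dir_strength e > 0"
  unfolding dir_strength_def by (intro sum_pos dir_alpha_pos) auto

text \<open>\<open>\<partial>L/\<partial>e\<^sub>k\<close>: the evidence \<open>e\<^sub>k\<close> enters only \<open>\<alpha>\<^sub>k\<close> and the strength \<open>S\<close>.\<close>
definition loss_partial :: "evid_loss \<Rightarrow> real^'n \<Rightarrow> real^'n \<Rightarrow> 'n \<Rightarrow> real" where
  "loss_partial L y e k =
     loss_term_da L (y $ k) (dir_alpha e $ k) (dir_strength e)
     + (\<Sum>j\<in>UNIV. loss_term_ds L (y $ j) (dir_alpha e $ j) (dir_strength e))"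

lemma has_real_derivative_loss_ev_axis:
  fixes e :: "real^'n::finite"
  assumes f: "(f has_real_derivative c) (at t)" and "f t = e $ k" and e: "\<forall>j. e $ j > -1"
  shows "((\<lambda>x. loss_ev L y (e + (f x - e $ k) *\<^sub>R axis k 1)) has_real_derivative
           c * loss_partial L y e k) (at t)"
proof -
  define u where "u x = e + (f x - e $ k) *\<^sub>R axis k 1" for x
  have u_nth: "u x $ j = (if j = k then f x else e $ j)" for x j
    by (simp add: u_def axis_def)
  have "u t = e"
    using \<open>f t = e $ k\<close> by (simp add: vec_eq_iff u_nth)
  have alpha: "((\<lambda>x. dir_alpha (u x) $ j) has_real_derivative (if j = k then c else 0)) (at t)" for j
    by (cases "j = k") (auto simp: dir_alpha_def u_nth intro!: derivative_eq_intros f)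
  have "((\<lambda>x. dir_strength (u x)) has_real_derivative (\<Sum>j\<in>UNIV. if j = k then c else 0)) (at t)"
    unfolding dir_strength_def by (intro DERIV_sum alpha)
  then have strength: "((\<lambda>x. dir_strength (u x)) has_real_derivative c) (at t)"
    by simp
  have "((\<lambda>x. loss_term L (y $ j) (dir_alpha (u x) $ j) (dir_strength (u x))) has_real_derivative
          loss_term_da L (y $ j) (dir_alpha e $ j) (dir_strength e) * (if j = k then c else 0)
          + loss_term_ds L (y $ j) (dir_alpha e $ j) (dir_strength e) * c) (at t)" for j
    using has_real_derivative_loss_term[OF alpha strength, where L = L and y = "y $ j"]
    by (simp add: \<open>u t = e\<close> dir_alpha_pos[OF e] dir_strength_pos[OF e])
  then have "((\<lambda>x. loss_ev L y (u x)) has_real_derivative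
          (\<Sum>j\<in>UNIV. loss_term_da L (y $ j) (dir_alpha e $ j) (dir_strength e) * (if j = k then c else 0)
                    + loss_term_ds L (y $ j) (dir_alpha e $ j) (dir_strength e) * c)) (at t)"
    unfolding loss_ev_eq_sum_loss_term by (rule DERIV_sum)
  moreover have delta: "(\<Sum>j\<in>UNIV. (if j = k then c else 0) * a j) = c * a k" for a :: "'n \<Rightarrow> real"
    by (subst sum.cong[OF refl, of _ _ "\<lambda>j. if j = k then c * a k else 0"]) auto
  ultimately show ?thesis
    by (simp add: u_def loss_partial_def sum.distrib sum_distrib_left algebra_simps)
qed

lemma loss_ev_partial:
  fixes e :: "real^'n::finite"
  assumes "\<forall>j. e $ j > -1"
  shows "partial_differentiable (loss_ev L y) k e"
    and "partial_at (loss_ev L y) k e = loss_partial L y e k"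
proof -
  have "((\<lambda>t. loss_ev L y (e + (t - e $ k) *\<^sub>R axis k 1)) has_real_derivative
          loss_partial L y e k) (at (e $ k))"
    using has_real_derivative_loss_ev_axis[OF DERIV_ident refl assms] by simp
  then show "partial_differentiable (loss_ev L y) k e"
    and "partial_at (loss_ev L y) k e = loss_partial L y e k"
    unfolding partial_differentiable_def partial_at_def real_differentiable_def
    by (auto intro: DERIV_imp_deriv)
qed

lemma act_nonneg: "act A t \<ge> 0"
  by (cases A) (auto simp: relu_def softplus_def)

lemma evidence_add_axis:
  "evidence A (z + (t - z $ k) *\<^sub>R axis k 1) = evidence A z + (act A t - evidence A z $ k) *\<^sub>R axis k 1"
  by (simp add: vec_eq_iff evidence_def axis_def)

fun act_deriv :: "activation \<Rightarrow> real \<Rightarrow> real" where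
  "act_deriv ReLU = relu_deriv"
| "act_deriv SoftPlus = (\<lambda>t. exp t / (1 + exp t))"
| "act_deriv ExpAct = exp"

lemma act_SoftPlus_eq: "act SoftPlus = (\<lambda>t. ln (1 + exp t))"
  and act_ExpAct_eq: "act ExpAct = exp"
  by (simp_all add: fun_eq_iff softplus_def)

lemma has_real_derivative_act: "A \<noteq> ReLU \<Longrightarrow> (act A has_real_derivative act_deriv A t) (at t)"
  by (cases A) (auto simp: act_SoftPlus_eq act_ExpAct_eq intro!: derivative_eq_intros add_pos_pos)

lemma act_tendsto_at_bot: "A \<noteq> ReLU \<Longrightarrow> (act A \<longlongrightarrow> 0) at_bot"
proof (cases A)
  case SoftPlus
  have "((\<lambda>t::real. ln (1 + exp t)) \<longlongrightarrow> ln (1 + 0)) at_bot"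
    by (intro tendsto_intros exp_at_bot) auto
  with SoftPlus show ?thesis by (simp add: act_SoftPlus_eq)
qed (auto simp: act_ExpAct_eq intro: exp_at_bot)

lemma act_deriv_tendsto_at_bot: "A \<noteq> ReLU \<Longrightarrow> (act_deriv A \<longlongrightarrow> 0) at_bot"
proof (cases A)
  case SoftPlus
  have "((\<lambda>t::real. exp t / (1 + exp t)) \<longlongrightarrow> 0 / (1 + 0)) at_bot"
    by (intro tendsto_intros exp_at_bot) auto
  with SoftPlus show ?thesis by simp
qed (auto intro: exp_at_bot)

lemma loss_logits_partial:
  assumes "A \<noteq> ReLU"
  shows "partial_differentiable (loss_logits L A y) k z"
    and "partial_at (loss_logits L A y) k z = act_deriv A (z $ k) * loss_partial L y (evidence A z) k"
proof -
  have "((\<lambda>t. loss_logits L A y (z + (t - z $ k) *\<^sub>R axis k 1)) has_real_derivative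
          act_deriv A (z $ k) * loss_partial L y (evidence A z) k) (at (z $ k))"
    unfolding loss_logits_def evidence_add_axis
    by (rule has_real_derivative_loss_ev_axis[OF has_real_derivative_act[OF assms]])
      (auto simp: evidence_def intro: less_le_trans[OF _ act_nonneg])
  then show "partial_differentiable (loss_logits L A y) k z"
    and "partial_at (loss_logits L A y) k z = act_deriv A (z $ k) * loss_partial L y (evidence A z) k"
    unfolding partial_differentiable_def partial_at_def real_differentiable_def
    by (auto intro: DERIV_imp_deriv)
qed

lemma filterlim_vec_nth_all_to_bot: "filterlim (\<lambda>z::real^'n::finite. z $ k) at_bot all_to_bot"
proof (unfold filterlim_at_bot all_to_bot_def, intro allI)
  fix b :: real
  show "eventually (\<lambda>z. z $ k \<le> b) (INF b. principal {z::real^'n. \<forall>k. z $ k \<le> b})"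
    by (rule eventually_INF1[of b]) (auto simp: eventually_principal)
qed

lemma tendsto_evidence_all_to_bot: "A \<noteq> ReLU \<Longrightarrow> (evidence A \<longlongrightarrow> 0) all_to_bot"
  unfolding evidence_def
  by (rule vec_tendstoI) (simp add: filterlim_compose[OF act_tendsto_at_bot filterlim_vec_nth_all_to_bot])

lemma tendsto_loss_partial:
  assumes "(e \<longlongrightarrow> e0) F" and "\<forall>j. e0 $ j > -1"
  shows "((\<lambda>x. loss_partial L y (e x) k) \<longlongrightarrow> loss_partial L y e0 k) F"
proof -
  have alpha: "((\<lambda>x. dir_alpha (e x) $ j) \<longlongrightarrow> dir_alpha e0 $ j) F" for j
    unfolding dir_alpha_def using assms(1) by (auto intro!: tendsto_intros)
  have strength: "((\<lambda>x. dir_strength (e x)) \<longlongrightarrow> dir_strength e0) F"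
    unfolding dir_strength_def by (intro tendsto_sum alpha)
  show ?thesis
    unfolding loss_partial_def
    by (intro tendsto_add tendsto_sum tendsto_loss_term_da tendsto_loss_term_ds alpha strength
        dir_alpha_pos dir_strength_pos assms(2))
qed

lemma loss_logits_partial_tendsto_zero:
  assumes "A \<noteq> ReLU"
  shows "((\<lambda>z. partial_at (loss_logits L A y) k z) \<longlongrightarrow> 0) all_to_bot"
proof -
  have "((\<lambda>z. act_deriv A (z $ k) * loss_partial L y (evidence A z) k)
          \<longlongrightarrow> 0 * loss_partial L y 0 k) all_to_bot"
    by (intro tendsto_mult filterlim_compose[OF act_deriv_tendsto_at_bot[OF assms]]
        filterlim_vec_nth_all_to_bot tendsto_loss_partial tendsto_evidence_all_to_bot[OF assms]) simp
  then show ?thesis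
    by (simp add: loss_logits_partial(2)[OF assms])
qed

lemma tendsto_sum_scaleR_bounded_zero:
  fixes J :: "'a \<Rightarrow> 'i \<Rightarrow> 'w::real_normed_vector"
  assumes p: "\<And>i. i \<in> I \<Longrightarrow> ((\<lambda>x. p x i) \<longlongrightarrow> 0) F"
    and J: "eventually (\<lambda>x. \<forall>i\<in>I. norm (J x i) \<le> B) F"
  shows "((\<lambda>x. \<Sum>i\<in>I. p x i *\<^sub>R J x i) \<longlongrightarrow> 0) F"
proof (rule tendsto_null_sum)
  fix i assume "i \<in> I"
  show "((\<lambda>x. p x i *\<^sub>R J x i) \<longlongrightarrow> 0) F"
  proof (rule Lim_null_comparison)
    show "eventually (\<lambda>x. norm (p x i *\<^sub>R J x i) \<le> \<bar>p x i\<bar> * B) F"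
      using J by eventually_elim (use \<open>i \<in> I\<close> in \<open>auto intro: mult_left_mono\<close>)
    have "((\<lambda>x. \<bar>p x i\<bar> * B) \<longlongrightarrow> 0 * B) F"
      by (intro tendsto_mult tendsto_rabs_zero p \<open>i \<in> I\<close> tendsto_const)
    then show "((\<lambda>x. \<bar>p x i\<bar> * B) \<longlongrightarrow> 0) F"
      by simp
  qed
qed

lemma evidence_ReLU_eq_zero: "\<forall>k. z $ k \<le> 0 \<Longrightarrow> evidence ReLU z = 0"
  by (simp add: vec_eq_iff evidence_def relu_def)

lemma relu_grad_logit_eq_zero: "z $ k \<le> 0 \<Longrightarrow> relu_grad_logit L y z k = 0"
  by (simp add: relu_grad_logit_def relu_deriv_def)

theorem theorem1:
  fixes g :: "'n::finite"
    and L :: evid_loss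
  assumes K2: "CARD('n) \<ge> 2"
  shows
    "(\<forall>(z::real^'n). (\<forall>k. z $ k \<le> 0) \<longrightarrow>
        evidence ReLU z = 0 \<and>
        (\<forall>k. partial_differentiable (loss_ev L (one_hot g)) k (evidence ReLU z)
             \<and> relu_grad_logit L (one_hot g) z k = 0) \<and>
        (\<forall>(J::'n \<Rightarrow> 'v::real_normed_vector).
            (\<Sum>k\<in>UNIV. relu_grad_logit L (one_hot g) z k *\<^sub>R J k) = 0))
     \<and>
     (\<forall>A\<in>{SoftPlus, ExpAct}.
        (\<forall>(z::real^'n) k. partial_differentiable (loss_logits L A (one_hot g)) k z)
      \<and> (\<forall>k. ((\<lambda>z. partial_at (loss_logits L A (one_hot g)) k z) \<longlongrightarrow> 0) all_to_bot)
      \<and> (\<forall>(J::real^'n \<Rightarrow> 'n \<Rightarrow> 'w::real_normed_vector).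
           (\<exists>B. eventually (\<lambda>z. \<forall>k. norm (J z k) \<le> B) all_to_bot) \<longrightarrow>
           ((\<lambda>z. \<Sum>k\<in>UNIV. partial_at (loss_logits L A (one_hot g)) k z *\<^sub>R J z k) \<longlongrightarrow> 0)
             all_to_bot))"
proof (intro conjI allI impI ballI)
  fix z :: "real^'n" and k assume z: "\<forall>k. z $ k \<le> 0"
  then show "evidence ReLU z = 0"
    by (rule evidence_ReLU_eq_zero)
  show "partial_differentiable (loss_ev L (one_hot g)) k (evidence ReLU z)"
    by (rule loss_ev_partial(1)) (simp add: z evidence_ReLU_eq_zero)
  show "relu_grad_logit L (one_hot g) z k = 0"
    using z by (simp add: relu_grad_logit_eq_zero)
next
  fix z :: "real^'n" and J :: "'n \<Rightarrow> 'v" assume "\<forall>k. z $ k \<le> 0"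
  then show "(\<Sum>k\<in>UNIV. relu_grad_logit L (one_hot g) z k *\<^sub>R J k) = 0"
    by (simp add: relu_grad_logit_eq_zero)
next
  fix A assume "A \<in> {SoftPlus, ExpAct}"
  then have A: "A \<noteq> ReLU" by auto
  fix z :: "real^'n" and k
  show "partial_differentiable (loss_logits L A (one_hot g)) k z"
    by (rule loss_logits_partial(1)[OF A])
  show "((\<lambda>z. partial_at (loss_logits L A (one_hot g)) k z) \<longlongrightarrow> 0) all_to_bot"
    by (rule loss_logits_partial_tendsto_zero[OF A])
next
  fix A and J :: "real^'n \<Rightarrow> 'n \<Rightarrow> 'w"
  assume "A \<in> {SoftPlus, ExpAct}" and "\<exists>B. eventually (\<lambda>z. \<forall>k. norm (J z k) \<le> B) all_to_bot"
  then show "((\<lambda>z. \<Sum>k\<in>UNIV. partial_at (loss_logits L A (one_hot g)) k z *\<^sub>R J z k) \<longlongrightarrow> 0)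
      all_to_bot"
    by (auto intro!: tendsto_sum_scaleR_bounded_zero loss_logits_partial_tendsto_zero)
qed

end
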